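(* Let $G$ be a graph with at least one vertex and maximum degree $\Delta$, and let $\lambda,\beta,\gamma>0$ be such that the hard-core model on $G$ at fugacity $\lambda$ has local $(\beta,\gamma)$-occupancy. Then \[ \frac{1}{|V(G)|}\,\frac{\lambda Z_G'(\lambda)}{Z_G(\lambda)}\ \ge\ \frac{1}{\beta+\gamma\Delta}, \qquad\text{and in particular}\qquad \alpha(G)\ \ge\ \frac{|V(G)|}{\beta+\gamma\Delta}. \]
   Context: All graphs are finite and simple. For a graph $G$, $\mathcal I(G)$ denotes the set of independent sets of $G$ (including $\varnothing$), $\alpha(G)$ the maximum size of an independent set, and $Z_G(\lambda)=\sum_{I\in\mathcal I(G)}\lambda^{|I|}$ the partition function (independence polynomial), with $Z_G'$ its derivative in $\lambda$. The hard-core model on $G$ at fugacity $\lambda>0$ is the probability distribution on $\mathcal I(G)$ with $\Pr(\mathbf I=I)=\lambda^{|I|}/Z_G(\lambda)$; note $\mathbb E|\mathbf I|=\lambda Z_G'(\lambda)/Z_G(\lambda)$. $N(u)$ is the neighbourhood of $u$ and $G[N(u)]$ the subgraph it induces. Given $\lambda>0$ and positive reals $(\beta_u,\gamma_u)$ for $u\in V(G)$, the hard-core model on $G$ at fugacity $\lambda$ has local $(\beta_u,\gamma_u)_u$-occupancy if for every $u\in V(G)$ and every induced subgraph $F$ of $G[N(u)]$ (including the graph with no vertices, for which $Z_F=1$, $Z_F'=0$), \[\beta_u\frac{\lambda}{1+\lambda}\frac{1}{Z_F(\lambda)}+\gamma_u\frac{\lambda Z_F'(\lambda)}{Z_F(\lambda)}\ge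 1.\] Local $(\beta,\gamma)$-occupancy means local $(\beta_u,\gamma_u)_u$-occupancy with $\beta_u=\beta,\gamma_u=\gamma$ for all $u$. *)

theory Defs
  imports "HOL-Analysis.Analysis"
begin

definition simple_graph :: "'a set \<Rightarrow> ('a \<Rightarrow> 'a \<Rightarrow> bool) \<Rightarrow> bool" where
  "simple_graph V E \<longleftrightarrow> finite V \<and> (\<forall>x y. E x y \<longrightarrow> x \<in> V \<and> y \<in> V)
     \<and> (\<forall>x y. E x y \<longrightarrow> E y x) \<and> (\<forall>x. \<not> E x x)"

definition neighbourhood :: "'a set \<Rightarrow> ('a \<Rightarrow> 'a \<Rightarrow> bool) \<Rightarrow> 'a \<Rightarrow> 'a set" where
  "neighbourhood V E u = {v \<in> V. E u v}"

definition degree :: "'a set \<Rightarrow> ('a \<Rightarrow> 'a \<Rightarrow> bool) \<Rightarrow> 'a \<Rightarrow> nat" where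
  "degree V E u = card (neighbourhood V E u)"

definition max_degree :: "'a set \<Rightarrow> ('a \<Rightarrow> 'a \<Rightarrow> bool) \<Rightarrow> nat" where
  "max_degree V E = Max (degree V E ` V)"

definition indep_sets :: "'a set \<Rightarrow> ('a \<Rightarrow> 'a \<Rightarrow> bool) \<Rightarrow> 'a set set" where
  "indep_sets V E = {I. I \<subseteq> V \<and> (\<forall>x\<in>I. \<forall>y\<in>I. \<not> E x y)}"

definition indep_number :: "'a set \<Rightarrow> ('a \<Rightarrow> 'a \<Rightarrow> bool) \<Rightarrow> nat" where
  "indep_number V E = Max (card ` indep_sets V E)"

definition Z :: "'a set \<Rightarrow> ('a \<Rightarrow> 'a \<Rightarrow> bool) \<Rightarrow> real \<Rightarrow> real" where
  "Z V E lam = (\<Sum>I\<in>indep_sets V E. lam ^ card I)"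

definition Z' :: "'a set \<Rightarrow> ('a \<Rightarrow> 'a \<Rightarrow> bool) \<Rightarrow> real \<Rightarrow> real" where
  "Z' V E lam = (\<Sum>I\<in>indep_sets V E. real (card I) * lam ^ (card I - 1))"

definition induced_edges :: "('a \<Rightarrow> 'a \<Rightarrow> bool) \<Rightarrow> 'a set \<Rightarrow> 'a \<Rightarrow> 'a \<Rightarrow> bool" where
  "induced_edges E S = (\<lambda>x y. x \<in> S \<and> y \<in> S \<and> E x y)"

text \<open>Local (beta_u, gamma_u)_u-occupancy: for every vertex u and every induced
  subgraph F of G[N(u)] (i.e. F = G[S] for S \<subseteq> N(u), including S empty).\<close>
definition local_occupancy ::
  "'a set \<Rightarrow> ('a \<Rightarrow> 'a \<Rightarrow> bool) \<Rightarrow> real \<Rightarrow> ('a \<Rightarrow> real) \<Rightarrow> ('a \<Rightarrow> real) \<Rightarrow> bool" where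
  "local_occupancy V E lam \<beta> \<gamma> \<longleftrightarrow>
     (\<forall>u\<in>V. \<forall>S. S \<subseteq> neighbourhood V E u \<longrightarrow>
        \<beta> u * (lam / (1 + lam)) * (1 / Z S (induced_edges E S) lam)
        + \<gamma> u * (lam * Z' S (induced_edges E S) lam / Z S (induced_edges E S) lam) \<ge> 1)"

end

theory Submission
  imports Defs
begin

text \<open>Fix a vertex u and condition on the part J of the random independent set lying outside
  the closed neighbourhood of u. Given J, the set is either J plus u, or J plus an independent
  set of the subgraph induced by the neighbours of u that have no neighbour in J. The local
  occupancy inequality for that subgraph, together with its instance for the empty subgraph
  (which forces \<beta> \<lambda> \<ge> 1 + \<lambda>), makes the expected value of
  \<beta> [u occupied] + \<gamma> (number of occupied neighbours of u) at least 1 on every fibre.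
  Summing over u, each occupied vertex v is counted once for itself and deg v \<le> \<Delta> times
  as a neighbour, so (\<beta> + \<gamma> \<Delta>) E|I| \<ge> |V|; and E|I| \<le> \<alpha>(G).\<close>

lemma finite_indep_sets: "finite V \<Longrightarrow> finite (indep_sets V E)"
  unfolding indep_sets_def by (rule finite_subset[of _ "Pow V"]) auto

lemma empty_in_indep_sets: "{} \<in> indep_sets V E"
  unfolding indep_sets_def by auto

lemma indep_sets_empty: "indep_sets {} E = {{}}"
  unfolding indep_sets_def by auto

lemma Z_ge_1:
  assumes "finite V" "lam \<ge> 0"
  shows "Z V E lam \<ge> 1"
proof -
  have "lam ^ card ({} :: 'a set) \<le> (\<Sum>I\<in>indep_sets V E. lam ^ card I)"
    by (rule member_le_sum) (use assms finite_indep_sets empty_in_indep_sets in auto)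
  then show ?thesis unfolding Z_def by simp
qed

lemma lam_mult_Z': "lam * Z' V E lam = (\<Sum>I\<in>indep_sets V E. real (card I) * lam ^ card I)"
  unfolding Z'_def sum_distrib_left by (rule sum.cong) (auto simp: power_eq_if)

lemma lam_mult_Z'_le_indep_number:
  assumes "finite V" "lam \<ge> 0"
  shows "lam * Z' V E lam \<le> real (indep_number V E) * Z V E lam"
proof -
  have "card I \<le> indep_number V E" if "I \<in> indep_sets V E" for I
    unfolding indep_number_def using that finite_indep_sets[OF assms(1)] by (auto intro: Max_ge)
  then have "(\<Sum>I\<in>indep_sets V E. real (card I) * lam ^ card I)
      \<le> (\<Sum>I\<in>indep_sets V E. real (indep_number V E) * lam ^ card I)"
    using assms(2) by (intro sum_mono mult_right_mono) auto
  then show ?thesis unfolding lam_mult_Z' Z_def sum_distrib_left .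
qed

definition free_neighbours :: "'a set \<Rightarrow> ('a \<Rightarrow> 'a \<Rightarrow> bool) \<Rightarrow> 'a \<Rightarrow> 'a set \<Rightarrow> 'a set" where
  "free_neighbours V E u J = {v \<in> neighbourhood V E u. \<forall>j\<in>J. \<not> E v j}"

lemma free_neighbours_subset: "free_neighbours V E u J \<subseteq> neighbourhood V E u"
  unfolding free_neighbours_def by auto

lemma indep_sets_fibre:
  assumes sg: "simple_graph V E" and u: "u \<in> V"
    and J: "J \<in> indep_sets V E" "J \<inter> insert u (neighbourhood V E u) = {}"
  defines "S \<equiv> free_neighbours V E u J"
  shows "{I \<in> indep_sets V E. I - insert u (neighbourhood V E u) = J}
       = insert (insert u J) ((\<union>) J ` indep_sets S (induced_edges E S))"
    (is "?F = insert _ ((\<union>) J ` ?K)")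
proof (intro equalityI subsetI)
  let ?N = "neighbourhood V E u"
  have symE: "\<And>x y. E x y \<Longrightarrow> E y x" and irr: "\<And>x. \<not> E x x"
    using sg unfolding simple_graph_def by auto
  fix I
  { assume "I \<in> ?F"
    then have I: "I \<in> indep_sets V E" "I - insert u ?N = J" by auto
    show "I \<in> insert (insert u J) ((\<union>) J ` ?K)"
    proof (cases "u \<in> I")
      case True
      then have "I \<inter> ?N = {}" using I(1) symE unfolding indep_sets_def neighbourhood_def by blast
      then show ?thesis using I(2) True by auto
    next
      case False
      have "I \<inter> ?N \<in> ?K" using I symE
        unfolding indep_sets_def S_def free_neighbours_def induced_edges_def by auto
      moreover have "I = J \<union> (I \<inter> ?N)" using I(2) False by auto
      ultimately show ?thesis by blast
    qed }
  { assume "I \<in> insert (insert u J) ((\<union>) J ` ?K)"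
    then consider "I = insert u J" | K where "K \<in> ?K" "I = J \<union> K" by auto
    then show "I \<in> ?F"
    proof cases
      case 1
      then show ?thesis using J u symE irr unfolding indep_sets_def neighbourhood_def by auto
    next
      case (2 K)
      then have KS: "K \<subseteq> S" and "\<forall>x\<in>K. \<forall>y\<in>K. \<not> E x y"
        unfolding indep_sets_def induced_edges_def by auto
      moreover have "\<forall>x\<in>K. \<forall>j\<in>J. \<not> E x j \<and> \<not> E j x"
        using KS symE unfolding S_def free_neighbours_def by blast
      ultimately show ?thesis using 2(2) J
        unfolding S_def free_neighbours_def indep_sets_def neighbourhood_def by auto
    qed }
qed

lemma sum_indep_sets_fibre:
  assumes sg: "simple_graph V E" and u: "u \<in> V"
    and J: "J \<in> indep_sets V E" "J \<inter> insert u (neighbourhood V E u) = {}"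
  defines "S \<equiv> free_neighbours V E u J"
  shows "(\<Sum>I | I \<in> indep_sets V E \<and> I - insert u (neighbourhood V E u) = J. h I)
       = h (insert u J) + (\<Sum>K\<in>indep_sets S (induced_edges E S). h (J \<union> K))"
proof -
  let ?N = "neighbourhood V E u" and ?K = "indep_sets S (induced_edges E S)"
  have irr: "\<And>x. \<not> E x x" and fV: "finite V" using sg unfolding simple_graph_def by auto
  have KN: "K \<subseteq> ?N" if "K \<in> ?K" for K
    using that free_neighbours_subset[of V E u J] unfolding S_def indep_sets_def by auto
  have "u \<notin> ?N" using irr unfolding neighbourhood_def by auto
  then have notin: "insert u J \<notin> (\<union>) J ` ?K"
    using J(2) KN by (auto simp: image_iff)
  have inj: "inj_on ((\<union>) J) ?K"
  proof (rule inj_onI)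
    fix K1 K2 assume "K1 \<in> ?K" "K2 \<in> ?K" "J \<union> K1 = J \<union> K2"
    then show "K1 = K2" using J(2) KN[of K1] KN[of K2] by blast
  qed
  have "S \<subseteq> V" unfolding S_def free_neighbours_def neighbourhood_def by auto
  then have "finite ?K" using fV finite_indep_sets finite_subset by blast
  then show ?thesis
    unfolding indep_sets_fibre[OF assms(1-4), folded S_def]
    using notin inj by (simp add: sum.reindex)
qed

lemma sum_indep_sets_decompose:
  assumes sg: "simple_graph V E" and u: "u \<in> V"
  shows "(\<Sum>I\<in>indep_sets V E. h I) =
    (\<Sum>J | J \<in> indep_sets V E \<and> J \<inter> insert u (neighbourhood V E u) = {}.
        h (insert u J) + (\<Sum>K\<in>indep_sets (free_neighbours V E u J)
                              (induced_edges E (free_neighbours V E u J)). h (J \<union> K)))"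
proof -
  let ?C = "insert u (neighbourhood V E u)"
  let ?T = "{J. J \<in> indep_sets V E \<and> J \<inter> ?C = {}}"
  have fI: "finite (indep_sets V E)"
    using sg finite_indep_sets unfolding simple_graph_def by blast
  have img: "(\<lambda>I. I - ?C) ` indep_sets V E \<subseteq> ?T"
    unfolding indep_sets_def by auto
  have "(\<Sum>I\<in>indep_sets V E. h I) = (\<Sum>J\<in>?T. \<Sum>I | I \<in> indep_sets V E \<and> I - ?C = J. h I)"
    using sum.group[OF fI _ img, of h] fI by simp
  also have "\<dots> = (\<Sum>J\<in>?T. h (insert u J) + (\<Sum>K\<in>indep_sets (free_neighbours V E u J)
                              (induced_edges E (free_neighbours V E u J)). h (J \<union> K)))"
    by (rule sum.cong) (use sum_indep_sets_fibre[OF sg u] in auto)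
  finally show ?thesis .
qed

lemma occupancy_fibre_nonneg:
  fixes lam \<beta> \<gamma> z z' :: real
  assumes "lam > 0" "z \<ge> 1"
    and empty: "\<beta> * (lam / (1 + lam)) \<ge> 1"
    and occ: "\<beta> * (lam / (1 + lam)) * (1 / z) + \<gamma> * (lam * z' / z) \<ge> 1"
  shows "lam * (\<beta> - 1) + (\<gamma> * (lam * z') - z) \<ge> 0"
proof -
  have "1 \<le> (\<beta> * (lam / (1 + lam)) + \<gamma> * (lam * z')) / z"
    using occ by (simp add: add_divide_distrib)
  then have "\<beta> * (lam / (1 + lam)) + \<gamma> * (lam * z') \<ge> z"
    using \<open>z \<ge> 1\<close> by (simp add: le_divide_eq)
  moreover have "\<beta> * (lam / (1 + lam)) \<le> lam * (\<beta> - 1)"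
  proof -
    have "1 + lam \<le> \<beta> * lam" using empty \<open>lam > 0\<close> by (simp add: field_simps)
    then have "(1 + lam) * lam \<le> \<beta> * lam * lam" using \<open>lam > 0\<close> by simp
    then show ?thesis using \<open>lam > 0\<close> by (simp add: field_simps)
  qed
  ultimately show ?thesis by linarith
qed

lemma local_occupancy_vertex:
  assumes sg: "simple_graph V E" and lam: "lam > 0"
    and occ: "local_occupancy V E lam \<beta> \<gamma>" and u: "u \<in> V"
  shows "0 \<le> (\<Sum>I\<in>indep_sets V E. lam ^ card I *
            (\<beta> u * of_bool (u \<in> I) + \<gamma> u * real (card (I \<inter> neighbourhood V E u)) - 1))"
    (is "0 \<le> (\<Sum>I\<in>_. ?h I)")
proof -
  let ?N = "neighbourhood V E u"
  have fV: "finite V" and irr: "\<And>x. \<not> E x x" using sg unfolding simple_graph_def by auto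
  have uN: "u \<notin> ?N" using irr unfolding neighbourhood_def by auto
  have occ_u: "\<beta> u * (lam / (1 + lam)) * (1 / Z S (induced_edges E S) lam)
        + \<gamma> u * (lam * Z' S (induced_edges E S) lam / Z S (induced_edges E S) lam) \<ge> 1"
    if "S \<subseteq> ?N" for S
    using occ u that unfolding local_occupancy_def by blast
  have empty: "\<beta> u * (lam / (1 + lam)) \<ge> 1"
    using occ_u[of "{}"] by (simp add: Z_def Z'_def indep_sets_empty)
  have "0 \<le> ?h (insert u J) + (\<Sum>K\<in>indep_sets (free_neighbours V E u J)
                 (induced_edges E (free_neighbours V E u J)). ?h (J \<union> K))"
    if J: "J \<in> indep_sets V E" "J \<inter> insert u ?N = {}" for J
  proof -
    define S where "S = free_neighbours V E u J"
    let ?K = "indep_sets S (induced_edges E S)"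
    let ?z = "Z S (induced_edges E S) lam" and ?z' = "Z' S (induced_edges E S) lam"
    have SN: "S \<subseteq> ?N" unfolding S_def by (rule free_neighbours_subset)
    have fS: "finite S" using SN fV unfolding neighbourhood_def by (auto intro: finite_subset)
    have fJ: "finite J" using J(1) fV unfolding indep_sets_def by (auto intro: finite_subset)
    have "insert u J \<inter> ?N = {}" "card (insert u J) = Suc (card J)" using J(2) uN fJ by auto
    then have h_u: "?h (insert u J) = lam ^ card J * (lam * (\<beta> u - 1))" by simp
    have h_K: "?h (J \<union> K) = lam ^ card J * (lam ^ card K * (\<gamma> u * real (card K) - 1))"
      if K: "K \<in> ?K" for K
    proof -
      have KN: "K \<subseteq> ?N" "finite K"
        using K SN fS unfolding indep_sets_def by (auto intro: finite_subset)
      then have "card (J \<union> K) = card J + card K" "u \<notin> J \<union> K" "(J \<union> K) \<inter> ?N = K"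
        using fJ J(2) uN by (auto intro: card_Un_disjoint)
      then show ?thesis by (simp add: power_add algebra_simps)
    qed
    have sum_K: "(\<Sum>K\<in>?K. lam ^ card K * (\<gamma> u * real (card K) - 1)) = \<gamma> u * (lam * ?z') - ?z"
      unfolding lam_mult_Z' Z_def by (simp add: sum_subtractf sum_distrib_left algebra_simps)
    have "0 \<le> lam * (\<beta> u - 1) + (\<gamma> u * (lam * ?z') - ?z)"
      using occupancy_fibre_nonneg[OF lam Z_ge_1[OF fS] empty occ_u[OF SN]] lam by simp
    then show ?thesis
      using h_u h_K sum_K lam unfolding S_def[symmetric]
      by (simp add: sum_distrib_left[symmetric] distrib_left[symmetric])
  qed
  then show ?thesis
    unfolding sum_indep_sets_decompose[OF sg u, of ?h] by (intro sum_nonneg) auto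
qed

lemma degree_le_max_degree:
  "finite V \<Longrightarrow> v \<in> V \<Longrightarrow> degree V E v \<le> max_degree V E"
  unfolding max_degree_def by (auto intro: Max_ge)

lemma sum_card_inter_neighbourhood:
  assumes sg: "simple_graph V E" and IV: "I \<subseteq> V"
  shows "(\<Sum>u\<in>V. real (card (I \<inter> neighbourhood V E u))) = (\<Sum>v\<in>I. real (degree V E v))"
proof -
  have fV: "finite V" and symE: "\<And>x y. E x y \<Longrightarrow> E y x"
    using sg unfolding simple_graph_def by auto
  have fI: "finite I" using IV fV by (auto intro: finite_subset)
  have "I \<inter> neighbourhood V E u = I \<inter> {v. E u v}" for u
    using IV unfolding neighbourhood_def by auto
  then have "(\<Sum>u\<in>V. real (card (I \<inter> neighbourhood V E u))) = (\<Sum>u\<in>V. \<Sum>v\<in>I. of_bool (E u v))"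
    using fI by simp
  also have "\<dots> = (\<Sum>v\<in>I. \<Sum>u\<in>V. of_bool (E u v))" by (rule sum.swap)
  also have "\<dots> = (\<Sum>v\<in>I. real (degree V E v))"
  proof -
    have "V \<inter> {u. E u v} = neighbourhood V E v" for v
      using symE unfolding neighbourhood_def by auto
    then show ?thesis using fV by (simp add: degree_def)
  qed
  finally show ?thesis .
qed

lemma sum_card_inter_neighbourhood_le:
  assumes "simple_graph V E" "I \<subseteq> V"
  shows "(\<Sum>u\<in>V. real (card (I \<inter> neighbourhood V E u))) \<le> real (card I) * real (max_degree V E)"
proof -
  have "finite V" using assms(1) unfolding simple_graph_def by auto
  then have "(\<Sum>v\<in>I. real (degree V E v)) \<le> (\<Sum>v\<in>I. real (max_degree V E))"
    using assms(2) degree_le_max_degree[of V _ E] by (intro sum_mono) auto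
  then show ?thesis unfolding sum_card_inter_neighbourhood[OF assms] by simp
qed

lemma card_mult_Z_le_occupancy:
  assumes sg: "simple_graph V E" and lam: "lam > 0" and "\<gamma> \<ge> 0"
    and occ: "local_occupancy V E lam (\<lambda>_. \<beta>) (\<lambda>_. \<gamma>)"
  shows "real (card V) * Z V E lam \<le> (\<beta> + \<gamma> * real (max_degree V E)) * (lam * Z' V E lam)"
proof -
  let ?D = "\<beta> + \<gamma> * real (max_degree V E)" and ?n = "real (card V)"
  let ?h = "\<lambda>u I. lam ^ card I *
      (\<beta> * of_bool (u \<in> I) + \<gamma> * real (card (I \<inter> neighbourhood V E u)) - 1)"
  have fV: "finite V" using sg unfolding simple_graph_def by auto
  have "(\<Sum>u\<in>V. ?h u I) \<le> ?D * (real (card I) * lam ^ card I) - ?n * lam ^ card I"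
    if "I \<in> indep_sets V E" for I
  proof -
    have IV: "I \<subseteq> V" using that unfolding indep_sets_def by auto
    then have "(\<Sum>u\<in>V. ?h u I) = lam ^ card I * (\<beta> * real (card I)
        + \<gamma> * (\<Sum>u\<in>V. real (card (I \<inter> neighbourhood V E u))) - ?n)"
      using fV by (simp add: sum.distrib sum_subtractf sum_distrib_left[symmetric]
          Int_absorb1 algebra_simps)
    also have "\<dots> \<le> lam ^ card I * (\<beta> * real (card I)
        + \<gamma> * (real (card I) * real (max_degree V E)) - ?n)"
      using sum_card_inter_neighbourhood_le[OF sg IV] lam \<open>\<gamma> \<ge> 0\<close>
      by (intro mult_left_mono) (auto intro: mult_left_mono)
    finally show ?thesis by (simp add: algebra_simps)
  qed
  then have "(\<Sum>I\<in>indep_sets V E. \<Sum>u\<in>V. ?h u I)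
      \<le> (\<Sum>I\<in>indep_sets V E. ?D * (real (card I) * lam ^ card I) - ?n * lam ^ card I)"
    by (rule sum_mono)
  also have "\<dots> = ?D * (lam * Z' V E lam) - ?n * Z V E lam"
    unfolding lam_mult_Z' Z_def by (simp add: sum_subtractf sum_distrib_left)
  finally have "(\<Sum>u\<in>V. \<Sum>I\<in>indep_sets V E. ?h u I) \<le> ?D * (lam * Z' V E lam) - ?n * Z V E lam"
    by (subst sum.swap)
  moreover have "0 \<le> (\<Sum>u\<in>V. \<Sum>I\<in>indep_sets V E. ?h u I)"
    by (rule sum_nonneg) (rule local_occupancy_vertex[OF sg lam occ])
  ultimately show ?thesis by linarith
qed

theorem mainTheorem1:
  fixes V :: "'a set" and E :: "'a \<Rightarrow> 'a \<Rightarrow> bool"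
    and lam \<beta> \<gamma> :: real
  assumes "simple_graph V E"
    and "V \<noteq> {}"
    and "lam > 0" and "\<beta> > 0" and "\<gamma> > 0"
    and "local_occupancy V E lam (\<lambda>_. \<beta>) (\<lambda>_. \<gamma>)"
  shows "(1 / real (card V)) * (lam * Z' V E lam / Z V E lam)
            \<ge> 1 / (\<beta> + \<gamma> * real (max_degree V E))
       \<and> real (indep_number V E) \<ge> real (card V) / (\<beta> + \<gamma> * real (max_degree V E))"
proof -
  let ?D = "\<beta> + \<gamma> * real (max_degree V E)" and ?n = "real (card V)"
  let ?occ = "lam * Z' V E lam / Z V E lam"
  have fV: "finite V" using assms(1) unfolding simple_graph_def by auto
  have D: "?D > 0" using assms(4,5) by (simp add: add_pos_nonneg)
  have n: "?n > 0" using fV assms(2) by (simp add: card_gt_0_iff)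
  have Z: "Z V E lam \<ge> 1" using Z_ge_1[OF fV] assms(3) by simp
  have "?n * Z V E lam \<le> ?D * (lam * Z' V E lam)"
    using card_mult_Z_le_occupancy[OF assms(1,3) less_imp_le[OF assms(5)] assms(6)] .
  then have occ_ge: "?n / ?D \<le> ?occ" using D Z by (simp add: field_simps)
  have "1 / ?D \<le> (1 / ?n) * ?occ"
    using divide_right_mono[OF occ_ge, of ?n] n by (simp add: mult.commute)
  moreover have "?occ \<le> real (indep_number V E)"
    using lam_mult_Z'_le_indep_number[OF fV] assms(3) Z by (simp add: divide_le_eq)
  ultimately show ?thesis using occ_ge by auto
qed

end
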